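(* If $X$ is a prime permutation graph, then ${\rm Aut}(X)$ is isomorphic to a subgroup of $\mathbb{Z}_2^2$.
   Context: A permutation graph is a graph $X$ such that both $X$ and its complement $\overline X$ are comparability graphs (have transitive orientations). A module of $X$ is a set $M\subseteq V(X)$ such that every vertex outside $M$ is adjacent to all of $M$ or to none; $X$ is prime if its only modules are $V(X)$ and singletons. *)

theory Defs
  imports "HOL-Algebra.Algebra"
begin

definition graph :: "'a set \<Rightarrow> ('a \<Rightarrow> 'a \<Rightarrow> bool) \<Rightarrow> bool" where
  "graph V E \<longleftrightarrow> finite V \<and> (\<forall>u\<in>V. \<forall>v\<in>V. E u v \<longrightarrow> E v u) \<and> (\<forall>v\<in>V. \<not> E v v)"

definition compl_graph :: "'a set \<Rightarrow> ('a \<Rightarrow> 'a \<Rightarrow> bool) \<Rightarrow> ('a \<Rightarrow> 'a \<Rightarrow> bool)" where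
  "compl_graph V E = (\<lambda>u v. u \<noteq> v \<and> \<not> E u v)"

definition transitive_orientation ::
  "'a set \<Rightarrow> ('a \<Rightarrow> 'a \<Rightarrow> bool) \<Rightarrow> ('a \<Rightarrow> 'a \<Rightarrow> bool) \<Rightarrow> bool" where
  "transitive_orientation V E T \<longleftrightarrow>
     (\<forall>u v. T u v \<longrightarrow> u \<in> V \<and> v \<in> V) \<and>
     (\<forall>u\<in>V. \<forall>v\<in>V. u \<noteq> v \<longrightarrow> (E u v \<longleftrightarrow> T u v \<or> T v u)) \<and>
     (\<forall>u v. T u v \<longrightarrow> \<not> T v u) \<and>
     (\<forall>u v w. T u v \<longrightarrow> T v w \<longrightarrow> T u w)"

definition comparability_graph :: "'a set \<Rightarrow> ('a \<Rightarrow> 'a \<Rightarrow> bool) \<Rightarrow> bool" where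
  "comparability_graph V E \<longleftrightarrow> (\<exists>T. transitive_orientation V E T)"

definition permutation_graph :: "'a set \<Rightarrow> ('a \<Rightarrow> 'a \<Rightarrow> bool) \<Rightarrow> bool" where
  "permutation_graph V E \<longleftrightarrow>
     graph V E \<and> comparability_graph V E \<and> comparability_graph V (compl_graph V E)"

definition graph_module :: "'a set \<Rightarrow> ('a \<Rightarrow> 'a \<Rightarrow> bool) \<Rightarrow> 'a set \<Rightarrow> bool" where
  "graph_module V E M \<longleftrightarrow> M \<subseteq> V \<and>
     (\<forall>x \<in> V - M. (\<forall>m\<in>M. E x m) \<or> (\<forall>m\<in>M. \<not> E x m))"

definition prime_graph :: "'a set \<Rightarrow> ('a \<Rightarrow> 'a \<Rightarrow> bool) \<Rightarrow> bool" where
  "prime_graph V E \<longleftrightarrow>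
     (\<forall>M. graph_module V E M \<longrightarrow> M = {} \<or> M = V \<or> (\<exists>v. M = {v}))"

definition graph_auts :: "'a set \<Rightarrow> ('a \<Rightarrow> 'a \<Rightarrow> bool) \<Rightarrow> ('a \<Rightarrow> 'a) set" where
  "graph_auts V E = {f \<in> Bij V. \<forall>u\<in>V. \<forall>v\<in>V. E u v \<longleftrightarrow> E (f u) (f v)}"

definition Aut_graph :: "'a set \<Rightarrow> ('a \<Rightarrow> 'a \<Rightarrow> bool) \<Rightarrow> ('a \<Rightarrow> 'a) monoid" where
  "Aut_graph V E = (BijGroup V)\<lparr>carrier := graph_auts V E\<rparr>"

definition Z2_squared :: "(int \<times> int) monoid" where
  "Z2_squared = integer_mod_group 2 \<times>\<times> integer_mod_group 2"

end

theory Submission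
  imports Defs
begin

text \<open>Golumbic's forcing relation propagates the orientation of an edge to all edges of its
  implication class, and the vertices touched by one implication class form a module. In a prime
  graph that module is everything, and a triangle argument shows that all edges then lie in a single
  implication class; hence the graph and, being prime as well, its complement each have exactly two
  transitive orientations, \<open>T\<close> and its converse. An automorphism either preserves or reverses
  each of the two orientations, which gives a homomorphism \<open>Aut(X) \<rightarrow> \<int>\<^sub>2 \<times> \<int>\<^sub>2\<close>.
  It is injective: the union of the two orientations is a linear order of the vertices, and a
  permutation of a finite set preserving a linear order is the identity.\<close>

section \<open>Forcing and implication classes\<close>

lemma graph_sym: "graph V E \<Longrightarrow> u \<in> V \<Longrightarrow> v \<in> V \<Longrightarrow> E u v \<Longrightarrow> E v u"
  unfolding graph_def by blast

lemma graph_irrefl: "graph V E \<Longrightarrow> v \<in> V \<Longrightarrow> \<not> E v v"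
  unfolding graph_def by blast

lemma transitive_orientationD:
  assumes "transitive_orientation V E T"
  shows transitive_orientation_edge: "T u v \<Longrightarrow> u \<in> V \<and> v \<in> V \<and> u \<noteq> v \<and> E u v"
    and transitive_orientation_total: "u \<in> V \<Longrightarrow> v \<in> V \<Longrightarrow> u \<noteq> v \<Longrightarrow> E u v \<Longrightarrow> T u v \<or> T v u"
    and transitive_orientation_asym: "T u v \<Longrightarrow> \<not> T v u"
    and transitive_orientation_trans: "T u v \<Longrightarrow> T v w \<Longrightarrow> T u w"
  using assms unfolding transitive_orientation_def by metis+

fun forces :: "'a set \<Rightarrow> ('a \<Rightarrow> 'a \<Rightarrow> bool) \<Rightarrow> 'a \<times> 'a \<Rightarrow> 'a \<times> 'a \<Rightarrow> bool" where
  "forces V E (a, b) (c, d) \<longleftrightarrow> a \<in> V \<and> b \<in> V \<and> c \<in> V \<and> d \<in> V \<and> E a b \<and> E c d \<and>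
     (a = c \<and> b \<noteq> d \<and> \<not> E b d \<or> b = d \<and> a \<noteq> c \<and> \<not> E a c)"

abbreviation forced :: "'a set \<Rightarrow> ('a \<Rightarrow> 'a \<Rightarrow> bool) \<Rightarrow> 'a \<times> 'a \<Rightarrow> 'a \<times> 'a \<Rightarrow> bool" where
  "forced V E \<equiv> (forces V E)\<^sup>*\<^sup>*"

lemma forces_sym: "graph V E \<Longrightarrow> forces V E p q \<Longrightarrow> forces V E q p"
  by (cases p; cases q) (auto dest: graph_sym)

lemma forces_swap: "graph V E \<Longrightarrow> forces V E (a, b) (c, d) \<Longrightarrow> forces V E (b, a) (d, c)"
  by (auto dest: graph_sym)

lemma forced_sym: "forced V E p q \<Longrightarrow> graph V E \<Longrightarrow> forced V E q p"
  by (induction rule: rtranclp_induct)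
     (auto intro: converse_rtranclp_into_rtranclp dest: forces_sym)

lemma forced_swap: "forced V E (a, b) (c, d) \<Longrightarrow> graph V E \<Longrightarrow> forced V E (b, a) (d, c)"
  by (induction rule: rtranclp_induct2)
     (auto intro: rtranclp.rtrancl_into_rtrancl dest: forces_swap)

lemma forced_edge:
  "forced V E (a, b) (c, d) \<Longrightarrow> a \<in> V \<Longrightarrow> b \<in> V \<Longrightarrow> E a b \<Longrightarrow> c \<in> V \<and> d \<in> V \<and> E c d"
  by (induction rule: rtranclp_induct2) auto

lemma forces_orientation:
  assumes "graph V E" "transitive_orientation V E T" "forces V E (a, b) (c, d)" "T a b"
  shows "T c d"
proof -
  have "c \<noteq> d" "T c d \<or> T d c"
    using assms(1,3) transitive_orientation_total[OF assms(2)] by (auto dest: graph_irrefl)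
  moreover have "\<not> T d c"
  proof
    assume "T d c"
    then have "T d b \<or> T a c"
      using assms(3,4) transitive_orientation_trans[OF assms(2)] by auto
    then show False
      using assms(1,3) transitive_orientation_edge[OF assms(2)] by (auto dest: graph_sym)
  qed
  ultimately show ?thesis by blast
qed

lemma forced_orientation:
  assumes "graph V E" "transitive_orientation V E T" "forced V E (a, b) (c, d)" "T a b"
  shows "T c d"
  using assms(3,4) by (induction rule: rtranclp_induct2) (auto intro: forces_orientation[OF assms(1,2)])

definition forcing_vertices :: "'a set \<Rightarrow> ('a \<Rightarrow> 'a \<Rightarrow> bool) \<Rightarrow> 'a \<Rightarrow> 'a \<Rightarrow> 'a set" where
  "forcing_vertices V E a b = {z \<in> V. \<exists>w. forced V E (a, b) (z, w) \<or> forced V E (a, b) (w, z)}"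

lemma forcing_vertices_module:
  assumes gr: "graph V E" and ab: "a \<in> V" "b \<in> V" "E a b"
  shows "graph_module V E (forcing_vertices V E a b)"
proof -
  let ?M = "forcing_vertices V E a b"
  have edge: "c \<in> V \<and> d \<in> V \<and> E c d" if "forced V E (a, b) (c, d)" for c d
    using forced_edge[OF that ab] .
  have endpoints: "c \<in> ?M \<and> d \<in> ?M" if "forced V E (a, b) (c, d)" for c d
    using that edge[OF that] unfolding forcing_vertices_def by blast
  have same_side: "E x c \<longleftrightarrow> E x d" if x: "x \<in> V - ?M" and cd: "forced V E (a, b) (c, d)" for x c d
  proof -
    have "x \<noteq> c" "x \<noteq> d" using x endpoints[OF cd] by auto
    \<comment> \<open>otherwise \<open>(c, d)\<close> forces \<open>(c, x)\<close> or \<open>(x, d)\<close>, and \<open>x\<close> would lie in \<open>?M\<close>\<close>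
    moreover have "\<not> forced V E (a, b) (c, x)" "\<not> forced V E (a, b) (x, d)"
      using x endpoints by blast+
    ultimately show ?thesis
      using x edge[OF cd] cd rtranclp.rtrancl_into_rtrancl[OF cd, of "(c, x)"]
        rtranclp.rtrancl_into_rtrancl[OF cd, of "(x, d)"]
      by (auto dest: graph_sym[OF gr])
  qed
  have "E x c \<longleftrightarrow> E x a" if x: "x \<in> V - ?M" and cd: "forced V E (a, b) (c, d)" for x c d
    using cd
  proof (induction rule: rtranclp_induct2)
    case (step c' d' c d)
    from step(2) have "c = c' \<or> d = d'" by auto
    then show ?case
      using step.IH same_side[OF x step(1)] same_side[OF x rtranclp.rtrancl_into_rtrancl[OF step(1,2)]]
      by auto
  qed simp
  then have "E x m \<longleftrightarrow> E x a" if "x \<in> V - ?M" "m \<in> ?M" for x m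
    using that same_side unfolding forcing_vertices_def by blast
  then show ?thesis
    unfolding graph_module_def forcing_vertices_def by blast
qed

lemma prime_forcing_vertices:
  assumes gr: "graph V E" and pr: "prime_graph V E" and ab: "a \<in> V" "b \<in> V" "E a b"
  shows "forcing_vertices V E a b = V"
proof -
  have "a \<in> forcing_vertices V E a b" "b \<in> forcing_vertices V E a b" "a \<noteq> b"
    using ab graph_irrefl[OF gr] unfolding forcing_vertices_def by auto
  then show ?thesis
    using pr forcing_vertices_module[OF gr ab] unfolding prime_graph_def by (metis empty_iff singletonD)
qed

lemma forced_from_triangle_stays_at_apex:
  assumes gr: "graph V E" and V: "a \<in> V" "b \<in> V" "c \<in> V" and e: "E a b" "E a c" "E b c"
    and not_ba: "\<not> forced V E (b, c) (b, a)" and not_ac: "\<not> forced V E (b, c) (a, c)"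
    and q: "forced V E (b, c) (x, y)"
  shows "E a x \<and> forced V E (a, b) (a, x) \<and> E a y \<and> forced V E (a, c) (a, y)"
  using q
proof (induction rule: rtranclp_induct2)
  case (step x y x' y')
  note to' = rtranclp.rtrancl_into_rtrancl[OF step(1,2)]
  have IH: "E a x" "forced V E (a, b) (a, x)" "E a y" "forced V E (a, c) (a, y)"
    using step.IH by auto
  have inV: "x \<in> V" "y \<in> V" "x' \<in> V" "y' \<in> V" using step(2) by auto
  from step(2) consider "x' = x" "y \<noteq> y'" "\<not> E y y'" | "y' = y" "x \<noteq> x'" "\<not> E x x'"
    by auto
  then show ?case
  proof cases
    case 1
    have "E a y'"
    proof (rule ccontr)
      assume "\<not> E a y'"
      \<comment> \<open>then \<open>(x, y')\<close> forces \<open>(x, a)\<close>, while \<open>(x, a)\<close> is forced back to \<open>(b, a)\<close>\<close>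
      then have "E x a" "\<not> E y' a" using IH(1) V inV graph_sym[OF gr] by blast+
      then have "forced V E (b, c) (x, a)"
        using to' step(2) 1 V inV rtranclp.rtrancl_into_rtrancl[OF to', of "(x, a)"]
        by (cases "a = y'") auto
      moreover have "forced V E (x, a) (b, a)"
        using forced_sym[OF forced_swap[OF IH(2) gr] gr] .
      ultimately show False using not_ba by (meson rtranclp_trans)
    qed
    then have "forces V E (a, y) (a, y')" using IH 1 V inV by auto
    then show ?thesis using IH 1 \<open>E a y'\<close> rtranclp.rtrancl_into_rtrancl[OF IH(4)] by auto
  next
    case 2
    have "E a x'"
    proof (rule ccontr)
      assume "\<not> E a x'"
      then have "\<not> E x' a" using V inV graph_sym[OF gr] by blast
      then have "forced V E (b, c) (a, y)"
        using to' step(2) 2 IH(3) V inV rtranclp.rtrancl_into_rtrancl[OF to', of "(a, y)"]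
        by (cases "a = x'") auto
      then show False using not_ac forced_sym[OF IH(4) gr] by (meson rtranclp_trans)
    qed
    then have "forces V E (a, x) (a, x')" using IH 2 V inV by auto
    then show ?thesis using IH 2 \<open>E a x'\<close> rtranclp.rtrancl_into_rtrancl[OF IH(2)] by auto
  qed
qed (use e in simp)

lemma prime_triangle_forced:
  assumes gr: "graph V E" and pr: "prime_graph V E" and V: "a \<in> V" "b \<in> V" "c \<in> V"
    and e: "E a b" "E a c" "E b c"
  shows "forced V E (b, c) (b, a) \<or> forced V E (b, c) (a, c)"
proof (rule ccontr)
  assume "\<not> ?thesis"
  \<comment> \<open>the apex \<open>a\<close> is an endpoint of an edge forced by \<open>(b, c)\<close>, yet adjacent to both its endpoints\<close>
  moreover obtain w where "forced V E (b, c) (a, w) \<or> forced V E (b, c) (w, a)"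
    using prime_forcing_vertices[OF gr pr V(2,3) e(3)] V(1) unfolding forcing_vertices_def by blast
  ultimately show False
    using forced_from_triangle_stays_at_apex[OF gr V e] graph_irrefl[OF gr V(1)] by blast
qed

lemma prime_adjacent_edges_forced:
  assumes gr: "graph V E" and pr: "prime_graph V E" and V: "v \<in> V" "a \<in> V" "b \<in> V"
    and e: "E v a" "E v b"
  shows "forced V E (v, a) (v, b) \<or> forced V E (v, a) (b, v)"
proof (rule ccontr)
  assume not_forced: "\<not> ?thesis"
  then have "a \<noteq> b" by (metis rtranclp.rtrancl_refl)
  have "E a b"
  proof (rule ccontr)
    assume "\<not> E a b"
    then have "forces V E (v, a) (v, b)" using \<open>a \<noteq> b\<close> V e by simp
    then show False using not_forced by (metis r_into_rtranclp)
  qed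
  have e': "E a v" "E b v" "E b a" using e \<open>E a b\<close> graph_sym[OF gr] V by blast+
  have "forced V E (v, b) (v, a) \<or> forced V E (v, b) (a, b)"
    using prime_triangle_forced[OF gr pr V(2,1,3) e'(1) \<open>E a b\<close> e(2)] .
  moreover have "\<not> forced V E (v, b) (v, a)"
    using not_forced forced_sym[OF _ gr] by blast
  ultimately have "forced V E (v, b) (a, b)" by blast
  then have "forced V E (b, a) (b, v)"
    by (rule forced_sym[OF forced_swap[OF _ gr] gr])
  moreover have "forced V E (v, a) (b, a)"
    using prime_triangle_forced[OF gr pr V(3,1,2) e'(2,3) e(1)] not_forced by blast
  ultimately have "forced V E (v, a) (b, v)" by (rule rtranclp_trans[rotated])
  then show False using not_forced by blast
qed

lemma prime_edges_forced:
  assumes gr: "graph V E" and pr: "prime_graph V E" and V: "v \<in> V" "a \<in> V" "c \<in> V" "d \<in> V"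
    and e: "E v a" "E c d"
  shows "forced V E (v, a) (c, d) \<or> forced V E (v, a) (d, c)"
proof -
  obtain b where "forced V E (c, d) (v, b) \<or> forced V E (c, d) (b, v)"
    using prime_forcing_vertices[OF gr pr V(3,4) e(2)] V(1) unfolding forcing_vertices_def by blast
  then show ?thesis
  proof
    assume cd: "forced V E (c, d) (v, b)"
    then have vb: "forced V E (v, b) (c, d)" "b \<in> V" "E v b"
      using forced_sym[OF cd gr] forced_edge[OF cd V(3,4) e(2)] by auto
    show ?thesis
      using prime_adjacent_edges_forced[OF gr pr V(1,2) vb(2) e(1) vb(3)]
        rtranclp_trans[OF _ vb(1)] rtranclp_trans[OF _ forced_swap[OF vb(1) gr]] by blast
  next
    assume cd: "forced V E (c, d) (b, v)"
    then have bv: "forced V E (b, v) (c, d)" "b \<in> V" "E v b"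
      using forced_sym[OF cd gr] forced_edge[OF cd V(3,4) e(2)] graph_sym[OF gr] V(1) by auto
    show ?thesis
      using prime_adjacent_edges_forced[OF gr pr V(1,2) bv(2) e(1) bv(3)]
        rtranclp_trans[OF _ bv(1)] rtranclp_trans[OF _ forced_swap[OF bv(1) gr]] by blast
  qed
qed

lemma prime_transitive_orientation_eq_forced:
  assumes gr: "graph V E" and pr: "prime_graph V E" and T: "transitive_orientation V E T"
    and uv: "T u v"
  shows "T x y \<longleftrightarrow> forced V E (u, v) (x, y)"
proof
  assume xy: "T x y"
  have "forced V E (u, v) (x, y) \<or> forced V E (u, v) (y, x)"
    using transitive_orientation_edge[OF T uv] transitive_orientation_edge[OF T xy]
    by (intro prime_edges_forced[OF gr pr]) auto
  moreover have "\<not> forced V E (u, v) (y, x)"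
    using forced_orientation[OF gr T _ uv] transitive_orientation_asym[OF T xy] by blast
  ultimately show "forced V E (u, v) (x, y)" by blast
qed (rule forced_orientation[OF gr T _ uv])

lemma prime_transitive_orientation_unique:
  assumes gr: "graph V E" and pr: "prime_graph V E"
    and T: "transitive_orientation V E T" and S: "transitive_orientation V E S"
  shows "S = T \<or> S = T\<inverse>\<inverse>"
proof (cases "\<exists>u v. T u v")
  case False
  then show ?thesis
    using transitive_orientation_edge[OF S] transitive_orientation_total[OF T] by blast
next
  case True
  then obtain u v where uv: "T u v" by blast
  note T_iff = prime_transitive_orientation_eq_forced[OF gr pr T uv]
  have "S u v \<or> S v u"
    using transitive_orientation_edge[OF T uv] transitive_orientation_total[OF S] by blast
  then show ?thesis
  proof
    assume "S u v"
    then have "S x y = T x y" for x y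
      using prime_transitive_orientation_eq_forced[OF gr pr S] T_iff by blast
    then show ?thesis by blast
  next
    assume vu: "S v u"
    have "S x y = T y x" for x y
    proof -
      have "S x y \<longleftrightarrow> forced V E (v, u) (x, y)"
        using prime_transitive_orientation_eq_forced[OF gr pr S vu] .
      also have "\<dots> \<longleftrightarrow> forced V E (u, v) (y, x)"
        using forced_swap[OF _ gr, of v u x y] forced_swap[OF _ gr, of u v y x] by blast
      finally show ?thesis using T_iff by blast
    qed
    then show ?thesis by blast
  qed
qed

section \<open>A graph and its complement oriented together\<close>

lemma transitive_orientation_converse:
  "transitive_orientation V E T \<Longrightarrow> transitive_orientation V E T\<inverse>\<inverse>"
  unfolding transitive_orientation_def by blast

lemma compl_orientation_mixed_trans:
  assumes gr: "graph V E" and T: "transitive_orientation V E T"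
    and T': "transitive_orientation V (compl_graph V E) T'"
    and xy: "T x y" and yz: "T' y z"
  shows "T x z \<or> T' x z"
proof -
  have V: "x \<in> V" "y \<in> V" "z \<in> V" and "E x y" "\<not> E y z" "y \<noteq> z"
    using transitive_orientation_edge[OF T xy] transitive_orientation_edge[OF T' yz]
    unfolding compl_graph_def by auto
  then have "x \<noteq> z" "E y x" using graph_sym[OF gr] by blast+
  show ?thesis
  proof (cases "E x z")
    case True
    have "\<not> T z x"
      using transitive_orientation_trans[OF T _ xy] transitive_orientation_edge[OF T]
        graph_sym[OF gr] V \<open>\<not> E y z\<close> by blast
    then show ?thesis
      using transitive_orientation_total[OF T V(1,3) \<open>x \<noteq> z\<close> True] by blast
  next
    case False
    have "\<not> T' z x"
      using transitive_orientation_trans[OF T' yz] transitive_orientation_edge[OF T'] \<open>E y x\<close>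
      unfolding compl_graph_def by blast
    then show ?thesis
      using transitive_orientation_total[OF T' V(1,3) \<open>x \<noteq> z\<close>] False \<open>x \<noteq> z\<close>
      unfolding compl_graph_def by blast
  qed
qed

lemma compl_orientations_union_transp:
  assumes gr: "graph V E" and T: "transitive_orientation V E T"
    and T': "transitive_orientation V (compl_graph V E) T'"
  shows "transp (\<lambda>x y. T x y \<or> T' x y)"
proof (rule transpI)
  fix x y z assume "T x y \<or> T' x y" "T y z \<or> T' y z"
  then consider "T x y" "T y z" | "T' x y" "T' y z" | "T x y" "T' y z" | "T' x y" "T y z"
    by blast
  then show "T x z \<or> T' x z"
  proof cases
    case 1
    then show ?thesis using transitive_orientation_trans[OF T] by blast
  next
    case 2
    then show ?thesis using transitive_orientation_trans[OF T'] by blast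
  next
    case 3
    then show ?thesis by (rule compl_orientation_mixed_trans[OF gr T T'])
  next
    case 4
    then show ?thesis
      using compl_orientation_mixed_trans[OF gr transitive_orientation_converse[OF T]
          transitive_orientation_converse[OF T'], of z y x] by simp
  qed
qed

lemma finite_strict_linear_order_automorphism_id:
  assumes fin: "finite V" and irrefl: "\<forall>x\<in>V. \<not> L x x" and trans: "transp L"
    and total: "\<forall>x\<in>V. \<forall>y\<in>V. x \<noteq> y \<longrightarrow> L x y \<or> L y x"
    and f: "bij_betw f V V" and pres: "\<forall>x\<in>V. \<forall>y\<in>V. L (f x) (f y) \<longleftrightarrow> L x y"
    and x: "x \<in> V"
  shows "f x = x"
proof (rule ccontr)
  define below where "below x = {y \<in> V. L y x}" for x
  have below_image: "below (f x) = f ` below x" if "x \<in> V" for x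
  proof
    show "f ` below x \<subseteq> below (f x)"
      using that f pres by (auto simp: below_def bij_betw_def)
    show "below (f x) \<subseteq> f ` below x"
    proof
      fix z assume z: "z \<in> below (f x)"
      then have "z \<in> f ` V" using bij_betw_imp_surj_on[OF f] unfolding below_def by blast
      then obtain y where y: "y \<in> V" "z = f y" by blast
      then have "L y x" using z pres[rule_format, OF y(1) that] unfolding below_def by simp
      then show "z \<in> f ` below x" using y unfolding below_def by blast
    qed
  qed
  have card_below: "card (below (f x)) = card (below x)" if "x \<in> V" for x
    unfolding below_image[OF that]
    by (rule card_image, rule inj_on_subset[OF bij_betw_imp_inj_on[OF f]]) (auto simp: below_def)
  have below_mono: "card (below x) < card (below y)" if "L x y" "x \<in> V" for x y
  proof (rule psubset_card_mono)
    show "finite (below y)" using fin unfolding below_def by simp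
    have "below x \<subseteq> below y" using trans \<open>L x y\<close> unfolding below_def transp_def by blast
    moreover have "x \<in> below y" "x \<notin> below x" using that irrefl unfolding below_def by auto
    ultimately show "below x \<subset> below y" by blast
  qed
  assume "f x \<noteq> x"
  moreover have "f x \<in> V" using f x by (auto simp: bij_betw_def)
  ultimately have "L x (f x) \<or> L (f x) x" using total x by blast
  then show False
    using below_mono[of x "f x"] below_mono[of "f x" x] card_below[OF x] x \<open>f x \<in> V\<close> by linarith
qed

lemma graph_compl: "graph V E \<Longrightarrow> graph V (compl_graph V E)"
  unfolding graph_def compl_graph_def by blast

lemma graph_module_compl: "graph_module V (compl_graph V E) M \<longleftrightarrow> graph_module V E M"
  unfolding graph_module_def compl_graph_def by auto

lemma prime_graph_compl: "prime_graph V E \<Longrightarrow> prime_graph V (compl_graph V E)"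
  unfolding prime_graph_def graph_module_compl .

lemma graph_auts_compl:
  assumes "graph V E"
  shows "graph_auts V (compl_graph V E) = graph_auts V E"
proof -
  have "E u v \<longleftrightarrow> E (f u) (f v) \<longleftrightarrow> compl_graph V E u v \<longleftrightarrow> compl_graph V E (f u) (f v)"
    if "f \<in> Bij V" "u \<in> V" "v \<in> V" for f u v
  proof -
    have "f u \<in> V" "f v \<in> V" "f u = f v \<longleftrightarrow> u = v"
      using that Bij_imp_funcset[of f V] inj_on_eq_iff[of f V u v]
      unfolding Bij_def bij_betw_def by auto
    then show ?thesis
      using that graph_irrefl[OF assms] unfolding compl_graph_def by auto
  qed
  then show ?thesis unfolding graph_auts_def by blast
qed

section \<open>Automorphisms acting on orientations\<close>

definition pullback :: "'a set \<Rightarrow> ('a \<Rightarrow> 'a) \<Rightarrow> ('a \<Rightarrow> 'a \<Rightarrow> bool) \<Rightarrow> 'a \<Rightarrow> 'a \<Rightarrow> bool" where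
  "pullback V f T = (\<lambda>u v. u \<in> V \<and> v \<in> V \<and> T (f u) (f v))"

lemma pullback_transitive_orientation:
  assumes T: "transitive_orientation V E T" and f: "f \<in> graph_auts V E"
  shows "transitive_orientation V E (pullback V f T)"
  unfolding transitive_orientation_def pullback_def
proof (intro conjI allI ballI impI)
  fix u v assume uv: "u \<in> V" "v \<in> V" "u \<noteq> v"
  have fuv: "f u \<in> V" "f v \<in> V" "f u \<noteq> f v" and "E u v \<longleftrightarrow> E (f u) (f v)"
    using f uv Bij_imp_funcset[of f V] inj_on_eq_iff[of f V u v]
    unfolding graph_auts_def Bij_def bij_betw_def by auto
  moreover have "E (f u) (f v) \<longleftrightarrow> T (f u) (f v) \<or> T (f v) (f u)"
    using T fuv unfolding transitive_orientation_def by blast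
  ultimately show "E u v \<longleftrightarrow> (u \<in> V \<and> v \<in> V \<and> T (f u) (f v)) \<or> (v \<in> V \<and> u \<in> V \<and> T (f v) (f u))"
    using uv by simp
qed (use transitive_orientation_asym[OF T] transitive_orientation_trans[OF T] in blast)+

lemma prime_automorphism_pullback:
  assumes "graph V E" "prime_graph V E" "transitive_orientation V E T" "f \<in> graph_auts V E"
  shows "pullback V f T = T \<or> pullback V f T = T\<inverse>\<inverse>"
  using prime_transitive_orientation_unique[OF assms(1-3) pullback_transitive_orientation[OF assms(3,4)]] .

lemma pullback_compose:
  "g \<in> Bij V \<Longrightarrow> pullback V (compose V f g) T = pullback V g (pullback V f T)"
  unfolding pullback_def compose_def using Bij_imp_funcset by fastforce

lemma pullback_converse: "pullback V f T\<inverse>\<inverse> = (pullback V f T)\<inverse>\<inverse>"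
  unfolding pullback_def by auto

definition orientation_parity :: "'a set \<Rightarrow> ('a \<Rightarrow> 'a \<Rightarrow> bool) \<Rightarrow> ('a \<Rightarrow> 'a) \<Rightarrow> int" where
  "orientation_parity V T f = (if pullback V f T = T then 0 else 1)"

lemma orientation_parity_compose:
  assumes g: "g \<in> Bij V"
    and f_or: "pullback V f T = T \<or> pullback V f T = T\<inverse>\<inverse>"
    and g_or: "pullback V g T = T \<or> pullback V g T = T\<inverse>\<inverse>"
  shows "orientation_parity V T (compose V f g) = (orientation_parity V T f + orientation_parity V T g) mod 2"
proof -
  have "pullback V (compose V f g) T = pullback V g (pullback V f T)"
    using pullback_compose[OF g] .
  then show ?thesis
    using f_or g_or unfolding orientation_parity_def by (auto simp: pullback_converse)
qed

lemma Aut_graph_mult: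
  "f \<in> graph_auts V E \<Longrightarrow> g \<in> graph_auts V E \<Longrightarrow> f \<otimes>\<^bsub>Aut_graph V E\<^esub> g = compose V f g"
  by (simp add: Aut_graph_def BijGroup_def graph_auts_def)

lemma orientation_parity_hom:
  assumes "graph V E" "prime_graph V E" "transitive_orientation V E T"
  shows "orientation_parity V T \<in> hom (Aut_graph V E) (integer_mod_group 2)"
proof (rule homI)
  fix f g assume "f \<in> carrier (Aut_graph V E)" "g \<in> carrier (Aut_graph V E)"
  then have "f \<in> graph_auts V E" "g \<in> graph_auts V E" "g \<in> Bij V"
    by (auto simp: Aut_graph_def graph_auts_def)
  then show "orientation_parity V T (f \<otimes>\<^bsub>Aut_graph V E\<^esub> g) =
      orientation_parity V T f \<otimes>\<^bsub>integer_mod_group 2\<^esub> orientation_parity V T g"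
    using orientation_parity_compose[of g V f T] prime_automorphism_pullback[OF assms]
    by (simp add: Aut_graph_mult)
qed (simp add: orientation_parity_def carrier_integer_mod_group)

lemma graph_auts_subgroup: "subgroup (graph_auts V E) (BijGroup V)"
proof (rule subgroup.intro)
  fix f g assume f: "f \<in> graph_auts V E" and g: "g \<in> graph_auts V E"
  then have "g u \<in> V" if "u \<in> V" for u
    using that Bij_imp_funcset unfolding graph_auts_def by fastforce
  then have "compose V f g \<in> graph_auts V E"
    using f g compose_Bij unfolding graph_auts_def by (auto simp: compose_def)
  then show "f \<otimes>\<^bsub>BijGroup V\<^esub> g \<in> graph_auts V E"
    using f g by (simp add: BijGroup_def graph_auts_def)
next
  fix f assume f: "f \<in> graph_auts V E"
  then have fB: "f \<in> Bij V" and img: "f ` V = V"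
    unfolding graph_auts_def Bij_def bij_betw_def by auto
  have "E u v \<longleftrightarrow> E (inv_into V f u) (inv_into V f v)" if "u \<in> V" "v \<in> V" for u v
  proof -
    have "inv_into V f u \<in> V" "inv_into V f v \<in> V"
      using that Bij_inv_into_mem[OF fB] by auto
    moreover have "f (inv_into V f u) = u" "f (inv_into V f v) = v"
      using that img f_inv_into_f[of _ f V] by auto
    ultimately show ?thesis using f unfolding graph_auts_def by force
  qed
  then have "(\<lambda>x\<in>V. inv_into V f x) \<in> graph_auts V E"
    using restrict_inv_into_Bij[OF fB] unfolding graph_auts_def by simp
  then show "inv\<^bsub>BijGroup V\<^esub> f \<in> graph_auts V E"
    using inv_BijGroup[OF fB] by simp
qed (auto simp: graph_auts_def BijGroup_def id_Bij)

lemma group_Aut_graph: "group (Aut_graph V E)"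
  unfolding Aut_graph_def by (rule subgroup.subgroup_is_group[OF graph_auts_subgroup group_BijGroup])

lemma hom_DirProd_pair:
  "f \<in> hom G H \<Longrightarrow> g \<in> hom G K \<Longrightarrow> (\<lambda>x. (f x, g x)) \<in> hom G (H \<times>\<times> K)"
  by (auto simp: hom_def DirProd_def)

lemma group_Z2_squared: "group Z2_squared"
  unfolding Z2_squared_def by (intro DirProd_group group_integer_mod_group)

lemma hom_trivial_kernel_iso_subgroup:
  assumes "group G" "group H" "h \<in> hom G H" and ker: "\<forall>x\<in>carrier G. h x = \<one>\<^bsub>H\<^esub> \<longrightarrow> x = \<one>\<^bsub>G\<^esub>"
  shows "\<exists>K. subgroup K H \<and> G \<cong> H\<lparr>carrier := K\<rparr>"
proof -
  interpret group_hom G H h using assms by (simp add: group_hom_def group_hom_axioms_def)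
  have "kernel G H h = {\<one>\<^bsub>G\<^esub>}" using ker unfolding kernel_def by auto
  then have "inj_on h (carrier G)" by (rule trivial_ker_imp_inj)
  then have "h \<in> iso G (H\<lparr>carrier := h ` carrier G\<rparr>)"
    using homh unfolding iso_def hom_def bij_betw_def by auto
  then show ?thesis using img_is_subgroup is_isoI by blast
qed

lemma automorphism_fixing_orientations_id:
  assumes gr: "graph V E" and T: "transitive_orientation V E T"
    and T': "transitive_orientation V (compl_graph V E) T'"
    and f: "f \<in> graph_auts V E" and fT: "pullback V f T = T" and fT': "pullback V f T' = T'"
  shows "f = (\<lambda>x\<in>V. x)"
proof -
  let ?L = "\<lambda>x y. T x y \<or> T' x y"
  have fin: "finite V" using gr unfolding graph_def by simp
  have irrefl: "\<forall>x\<in>V. \<not> ?L x x"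
    using transitive_orientation_asym[OF T] transitive_orientation_asym[OF T'] by blast
  have total: "\<forall>x\<in>V. \<forall>y\<in>V. x \<noteq> y \<longrightarrow> ?L x y \<or> ?L y x"
    using transitive_orientation_total[OF T] transitive_orientation_total[OF T']
    unfolding compl_graph_def by blast
  have bij: "bij_betw f V V" using f unfolding graph_auts_def Bij_def by simp
  have "T (f x) (f y) = T x y" "T' (f x) (f y) = T' x y" if "x \<in> V" "y \<in> V" for x y
    using that fun_cong[OF fun_cong[OF fT, of x], of y] fun_cong[OF fun_cong[OF fT', of x], of y]
    unfolding pullback_def by simp_all
  then have pres: "\<forall>x\<in>V. \<forall>y\<in>V. ?L (f x) (f y) \<longleftrightarrow> ?L x y" by simp
  have "f x = x" if "x \<in> V" for x
    using finite_strict_linear_order_automorphism_id[OF fin irrefl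
        compl_orientations_union_transp[OF gr T T'] total bij pres that] .
  moreover have "f \<in> extensional V" using f Bij_imp_extensional unfolding graph_auts_def by blast
  ultimately show ?thesis by (auto simp: extensional_def)
qed

theorem mainTheorem6:
  fixes V :: "'a set" and E :: "'a \<Rightarrow> 'a \<Rightarrow> bool"
  assumes "permutation_graph V E" and "prime_graph V E"
  shows "\<exists>H. subgroup H Z2_squared \<and> Aut_graph V E \<cong> Z2_squared\<lparr>carrier := H\<rparr>"
proof -
  obtain T T' where gr: "graph V E" and T: "transitive_orientation V E T"
    and T': "transitive_orientation V (compl_graph V E) T'"
    using assms(1) unfolding permutation_graph_def comparability_graph_def by blast
  let ?parities = "\<lambda>f. (orientation_parity V T f, orientation_parity V T' f)"
  have "Aut_graph V (compl_graph V E) = Aut_graph V E"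
    unfolding Aut_graph_def graph_auts_compl[OF gr] ..
  then have "?parities \<in> hom (Aut_graph V E) Z2_squared"
    unfolding Z2_squared_def
    using orientation_parity_hom[OF gr assms(2) T]
      orientation_parity_hom[OF graph_compl[OF gr] prime_graph_compl[OF assms(2)] T']
    by (intro hom_DirProd_pair) simp_all
  moreover have "f = \<one>\<^bsub>Aut_graph V E\<^esub>"
    if "f \<in> carrier (Aut_graph V E)" "?parities f = \<one>\<^bsub>Z2_squared\<^esub>" for f
  proof -
    have "pullback V f T = T" "pullback V f T' = T'"
      using that(2) by (auto simp: Z2_squared_def orientation_parity_def split: if_splits)
    then show ?thesis
      using that(1) automorphism_fixing_orientations_id[OF gr T T']
      by (simp add: Aut_graph_def BijGroup_def)
  qed
  ultimately show ?thesis
    using hom_trivial_kernel_iso_subgroup[OF group_Aut_graph] group_Z2_squared by blast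
qed

end
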